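(* Let $M$ be a total dtpla with look-ahead states $P=\{\hat p_1,\dots,\hat p_n\}$. Then $$\sup\{\mathrm{height}(t)\mid t\in\mathrm{diff}(M)\}=\sup\{\mathrm{height}(M(C[p])/v)\mid C\in\mathcal C_\Sigma,\ p\in P,\ v\in V_\bot(\mathrm{pref}(M,C))\},$$ where suprema are taken in $\mathbb N\cup\{\infty\}$ and the supremum of the empty set is $0$. In particular, $\mathrm{diff}(M)$ is finite if and only if $\mathrm{diftup}(M)$ is finite, and then $\mathrm{maxdiff}(M)$ equals the maximal height of a component of a difference tuple of $M$.
   Context: Trees and patterns. For a ranked alphabet $\Delta$ and a set $Z$ of extra nullary symbols, $T_\Delta(Z)$ is the set of finite trees over $\Delta\cup Z$, and $T_\Delta=T_\Delta(\emptyset)$. Nodes are addresses in $\mathbb N_+^*$; $t/v$ denotes the subtree of $t$ at node $v$. The symbol $\bot$ is a special nullary symbol; $\mathcal P_\Delta=T_\Delta(\{\bot\})$ is the set of $\Delta$-patterns; $V_\bot(t)$ is the set of nodes of $t$ labelled $\bot$. For trees $t,t'$, $t\sqsubseteq t'$ means that $t'$ is obtained from $t$ by replacing some occurrences of $\bot$ by trees. For a finite nonempty set $T$ of trees, $\sqcap T$ is the greatest lower bound of $T$ w.r.t. $\sqsubseteq$ (largest common prefix): a node $v$ belongs to $\sqcap T$ iff $v$ is a node of all trees in $T$ and every proper ancestor of $v$ has the same label in all trees of $T$; its label is that common label if $v$ has the same label in all trees of $T$, and $\bot$ otherwise. A $\Sigma$-context is a tree $C\in T_\Sigma(\{\bot\})$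 with exactly one occurrence of $\bot$; $\mathcal C_\Sigma$ is the set of $\Sigma$-contexts, and $C[t]$ is the result of replacing $\bot$ in $C$ by $t$. Dtlas. A deterministic top-down tree transducer with look-ahead (dtla) $M$ from $\Sigma$ to $\Delta$ consists of a finite set $Q$ of states, a total deterministic bottom-up tree automaton with finite state set $P$ (look-ahead states) and transitions $\delta(a,p_1,\dots,p_k)\in P$ for $a\in\Sigma^{(k)}$, extended to $\delta_M:T_\Sigma\to P$ (write $[\![p]\!]_M=\{s\mid\delta_M(s)=p\}$), an axiom $A_M(p)\in T_\Delta(Q(\{x_0\}))$ for each $p\in P$, and for $q\in Q$, $a\in\Sigma^{(k)}$, $p_1,\dots,p_k\in P$ at most one rule $q(a(x_1\langle p_1\rangle,\dots,x_k\langle p_k\rangle))\to\zeta$ with $\zeta=\mathrm{rhs}_M(q,a,p_1,\dots,p_k)\in T_\Delta(Q(X_k))$, $X_k=\{x_1,\dots,x_k\}$. Semantics: $q_M(a(s_1,\dots,s_k))=\mathrm{rhs}_M(q,a,\delta_M(s_1),\dots,\delta_M(s_k))[q'(x_i)\leftarrow q'_M(s_i)\mid q'\in Q,i\in[k]]$ (a partial function $[\![q]\!]_M$), and $M(s)=A_M(\delta_M(s))[q(x_0)\leftarrow q_M(s)\mid q\in Q]$, defining $[\![M]\!]$. $M$ is total if $[\![M]\!]$ is total. A dtpla is a dtla with $|P|\ge2$. For $C\in\mathcal C_\Sigma$ and $p\in P$, $M(C[p])\in T_\Delta(Q\times P)$ is the output of $M$ on $C$ when the hole is treated as a leaf with look-ahead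 state $p$ that is not translated further: formally $p$ is an extra nullary input symbol with $\delta(p)=p$ and $q_M(p)=\langle q,p\rangle$ for all $q\in Q$. Difference trees and tuples. $\mathrm{diff}(M)=\{M(C[p])/v\mid C\in\mathcal C_\Sigma,\ p,p'\in P,\ v\in V_\bot(M(C[p])\sqcap M(C[p']))\}$, and $\mathrm{maxdiff}(M)$ is the maximal height of its elements (when finite). For a fixed enumeration $P=\{\hat p_1,\dots,\hat p_n\}$ and $C\in\mathcal C_\Sigma$, $\mathrm{pref}(M,C)=\sqcap\{M(C[\hat p_1]),\dots,M(C[\hat p_n])\}$, and the set of difference tuples is $\mathrm{diftup}(M)=\{(M(C[\hat p_1])/v,\dots,M(C[\hat p_n])/v)\mid C\in\mathcal C_\Sigma,\ v\in V_\bot(\mathrm{pref}(M,C))\}$. *)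

theory Defs
  imports Main "HOL-Library.Extended_Nat"
begin

datatype 'a tree = Nd 'a "'a tree list"

text \<open>Nodes are addresses (lists of child indices, 0-based here).\<close>
fun is_pos :: "'a tree \<Rightarrow> nat list \<Rightarrow> bool" where
  "is_pos (Nd a ts) [] = True"
| "is_pos (Nd a ts) (i # v) = (i < length ts \<and> is_pos (ts ! i) v)"

fun subt :: "'a tree \<Rightarrow> nat list \<Rightarrow> 'a tree" where
  "subt t [] = t"
| "subt (Nd a ts) (i # v) = subt (ts ! i) v"

fun root :: "'a tree \<Rightarrow> 'a" where
  "root (Nd a ts) = a"

definition lab :: "'a tree \<Rightarrow> nat list \<Rightarrow> 'a" where
  "lab t v = root (subt t v)"

fun height :: "'a tree \<Rightarrow> nat" where
  "height (Nd a ts) = Max (insert 0 (Suc ` set (map height ts)))"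

text \<open>Input symbols, possibly a look-ahead state as an extra nullary symbol (for C[p]).\<close>
datatype ('s, 'p) ilab = ISym 's | ILa 'p

text \<open>Right-hand sides: output symbols or calls q(x_i).\<close>
datatype ('d, 'q) rlab = RSym 'd | RCall 'q nat

text \<open>Output patterns: output symbols, pairs <q,p>, or bottom.\<close>
datatype ('d, 'q, 'p) olab = OSym 'd | OSt 'q 'p | OBot

record ('s, 'd, 'q, 'p) dtla =
  Sig :: "'s set"
  rkS :: "'s \<Rightarrow> nat"
  Del :: "'d set"
  rkD :: "'d \<Rightarrow> nat"
  Qs  :: "'q set"
  Ps  :: "'p set"
  dl  :: "'s \<Rightarrow> 'p list \<Rightarrow> 'p"
  ax  :: "'p \<Rightarrow> ('d, 'q) rlab tree"
  rl  :: "'q \<Rightarrow> 's \<Rightarrow> 'p list \<Rightarrow> ('d, 'q) rlab tree option"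

fun wf_rhs :: "('s, 'd, 'q, 'p) dtla \<Rightarrow> (nat \<Rightarrow> bool) \<Rightarrow> ('d, 'q) rlab tree \<Rightarrow> bool" where
  "wf_rhs M ok (Nd (RSym d) ts) = (d \<in> Del M \<and> length ts = rkD M d \<and> (\<forall>t\<in>set ts. wf_rhs M ok t))"
| "wf_rhs M ok (Nd (RCall q i) ts) = (ts = [] \<and> q \<in> Qs M \<and> ok i)"

definition wf_dtla :: "('s, 'd, 'q, 'p) dtla \<Rightarrow> bool" where
  "wf_dtla M \<longleftrightarrow>
     finite (Sig M) \<and> finite (Del M) \<and> finite (Qs M) \<and> finite (Ps M) \<and>
     (\<forall>a\<in>Sig M. \<forall>ps. length ps = rkS M a \<and> set ps \<subseteq> Ps M \<longrightarrow> dl M a ps \<in> Ps M) \<and>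
     (\<forall>p\<in>Ps M. wf_rhs M (\<lambda>i. i = 0) (ax M p)) \<and>
     (\<forall>q\<in>Qs M. \<forall>a\<in>Sig M. \<forall>ps \<zeta>. length ps = rkS M a \<and> set ps \<subseteq> Ps M \<and> rl M q a ps = Some \<zeta>
         \<longrightarrow> wf_rhs M (\<lambda>i. 1 \<le> i \<and> i \<le> rkS M a) \<zeta>)"

text \<open>Look-ahead automaton run (delta_M), with delta(p) = p for hole symbols.\<close>
fun la :: "('s, 'd, 'q, 'p) dtla \<Rightarrow> ('s, 'p) ilab tree \<Rightarrow> 'p" where
  "la M (Nd (ISym a) ts) = dl M a (map (la M) ts)"
| "la M (Nd (ILa p) ts) = p"

fun subst :: "('q \<Rightarrow> nat \<Rightarrow> ('d, 'q, 'p) olab tree option) \<Rightarrow> ('d, 'q) rlab tree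
               \<Rightarrow> ('d, 'q, 'p) olab tree option" where
  "subst f (Nd (RSym d) us) =
     (if (\<exists>u\<in>set us. subst f u = None) then None
      else Some (Nd (OSym d) (map (\<lambda>u. the (subst f u)) us)))"
| "subst f (Nd (RCall q i) us) = f q i"

lemma run_term_aux:
  fixes ts :: "'a tree list" and i :: nat
  assumes "Suc 0 \<le> i" "i \<le> length ts"
  shows "size (ts ! (i - Suc 0)) < Suc (size_list size ts)"
proof -
  have "ts ! (i - Suc 0) \<in> set ts" using assms by (intro nth_mem) simp
  then show ?thesis
    using size_list_estimation'[of _ ts "size (ts ! (i - Suc 0))" size] by fastforce
qed

text \<open>q_M (partial); q_M(p) = <q,p> on a look-ahead leaf.\<close>
function run :: "('s, 'd, 'q, 'p) dtla \<Rightarrow> 'q \<Rightarrow> ('s, 'p) ilab tree \<Rightarrow> ('d, 'q, 'p) olab tree option" where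
  "run M q (Nd (ILa p) ts) = Some (Nd (OSt q p) [])"
| "run M q (Nd (ISym a) ts) =
     (case rl M q a (map (la M) ts) of
        None \<Rightarrow> None
      | Some \<zeta> \<Rightarrow> subst (\<lambda>q' i. if 1 \<le> i \<and> i \<le> length ts then run M q' (ts ! (i - 1)) else None) \<zeta>)"
  by pat_completeness auto
termination
  by (relation "measure (\<lambda>(M, q, t). size t)") (auto intro: run_term_aux[simplified])

text \<open>M(t) = A_M(delta_M(t))[q(x_0) <- q_M(t)].\<close>
definition out :: "('s, 'd, 'q, 'p) dtla \<Rightarrow> ('s, 'p) ilab tree \<Rightarrow> ('d, 'q, 'p) olab tree option" where
  "out M t = subst (\<lambda>q i. if i = 0 then run M q t else None) (ax M (la M t))"

fun gr :: "('s, 'd, 'q, 'p) dtla \<Rightarrow> 's tree \<Rightarrow> bool" where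
  "gr M (Nd a ts) = (a \<in> Sig M \<and> length ts = rkS M a \<and> (\<forall>t\<in>set ts. gr M t))"

definition embed :: "'s tree \<Rightarrow> ('s, 'p) ilab tree" where
  "embed s = map_tree ISym s"

text \<open>Trees over Sigma plus bottom (None).\<close>
fun ctxw :: "('s, 'd, 'q, 'p) dtla \<Rightarrow> 's option tree \<Rightarrow> bool" where
  "ctxw M (Nd None ts) = (ts = [])"
| "ctxw M (Nd (Some a) ts) = (a \<in> Sig M \<and> length ts = rkS M a \<and> (\<forall>t\<in>set ts. ctxw M t))"

fun holes :: "'s option tree \<Rightarrow> nat" where
  "holes (Nd None ts) = 1"
| "holes (Nd (Some a) ts) = sum_list (map holes ts)"

definition is_ctx :: "('s, 'd, 'q, 'p) dtla \<Rightarrow> 's option tree \<Rightarrow> bool" where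
  "is_ctx M C \<longleftrightarrow> ctxw M C \<and> holes C = 1"

definition plug :: "'s option tree \<Rightarrow> 'p \<Rightarrow> ('s, 'p) ilab tree" where
  "plug C p = map_tree (\<lambda>x. case x of None \<Rightarrow> ILa p | Some a \<Rightarrow> ISym a) C"

definition MC :: "('s, 'd, 'q, 'p) dtla \<Rightarrow> 's option tree \<Rightarrow> 'p \<Rightarrow> ('d, 'q, 'p) olab tree option" where
  "MC M C p = out M (plug C p)"

definition total_dtla :: "('s, 'd, 'q, 'p) dtla \<Rightarrow> bool" where
  "total_dtla M \<longleftrightarrow> (\<forall>s. gr M s \<longrightarrow> out M (embed s) \<noteq> None)"

definition dtpla :: "('s, 'd, 'q, 'p) dtla \<Rightarrow> bool" where
  "dtpla M \<longleftrightarrow> wf_dtla M \<and> card (Ps M) \<ge> 2"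

definition la_reachable :: "('s, 'd, 'q, 'p) dtla \<Rightarrow> bool" where
  "la_reachable M \<longleftrightarrow> (\<forall>p\<in>Ps M. \<exists>s. gr M s \<and> la M (embed s) = p)"

text \<open>V_bot(glb T) for a nonempty finite set T of trees, following the node-wise definition.\<close>
definition Vbot_glb :: "('d, 'q, 'p) olab tree set \<Rightarrow> nat list set" where
  "Vbot_glb T = {v. (\<forall>t\<in>T. is_pos t v)
      \<and> (\<forall>u w. w \<noteq> [] \<and> u @ w = v \<longrightarrow> (\<forall>t\<in>T. \<forall>t'\<in>T. lab t u = lab t' u))
      \<and> ((\<exists>t\<in>T. \<exists>t'\<in>T. lab t v \<noteq> lab t' v) \<or> (\<forall>t\<in>T. lab t v = OBot))}"

definition diff :: "('s, 'd, 'q, 'p) dtla \<Rightarrow> ('d, 'q, 'p) olab tree set" where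
  "diff M = {subt t v | C p p' t t' v. is_ctx M C \<and> p \<in> Ps M \<and> p' \<in> Ps M \<and>
              MC M C p = Some t \<and> MC M C p' = Some t' \<and> v \<in> Vbot_glb {t, t'}}"

definition maxdiff :: "('s, 'd, 'q, 'p) dtla \<Rightarrow> nat" where
  "maxdiff M = Max (height ` diff M)"

text \<open>V_bot(pref(M,C)), defined when all M(C[p]) are defined.\<close>
definition Vpref :: "('s, 'd, 'q, 'p) dtla \<Rightarrow> 's option tree \<Rightarrow> nat list set" where
  "Vpref M C = {v. (\<forall>p\<in>Ps M. MC M C p \<noteq> None) \<and>
                   v \<in> Vbot_glb ((\<lambda>p. the (MC M C p)) ` Ps M)}"

text \<open>Difference tuples w.r.t. an enumeration (list) of P.\<close>
definition diftup :: "('s, 'd, 'q, 'p) dtla \<Rightarrow> 'p list \<Rightarrow> ('d, 'q, 'p) olab tree list set" where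
  "diftup M enum = {map (\<lambda>p. subt (the (MC M C p)) v) enum | C v. is_ctx M C \<and> v \<in> Vpref M C}"

end

theory Submission
  imports Defs
begin

text \<open>Since \<open>M\<close> is total and every look-ahead state is reachable, \<open>M(C[p])\<close> is defined for
  every context \<open>C\<close> and every \<open>p\<close>. These outputs are ranked trees, so trees carrying the same
  labels along a path also have the same nodes along it. Hence a node of
  \<open>V\<^sub>\<bottom>(M(C[p]) \<sqinter> M(C[p']))\<close> lies below a node of \<open>V\<^sub>\<bottom>(pref(M,C))\<close>: every element of
  \<open>diff(M)\<close> is a subtree of a component of a difference tuple. Conversely such a component is in
  \<open>diff(M)\<close>, witnessed by a state \<open>p'\<close> whose output has a different label there. Subtrees are
  not higher and a tree has finitely many subtrees, which gives all three claims.\<close>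

lemma Max_image_eq_if_dominated:
  fixes f :: "'a \<Rightarrow> 'b :: linorder"
  assumes "A \<subseteq> B" "finite B" "\<And>b. b \<in> B \<Longrightarrow> \<exists>a\<in>A. f b \<le> f a"
  shows "Max (f ` B) = Max (f ` A)"
proof (cases "A = {}")
  case True
  with assms(3) have "B = {}" by blast
  with True show ?thesis by simp
next
  case False
  with assms have "finite A" by (blast intro: finite_subset)
  show ?thesis
  proof (rule antisym)
    show "Max (f ` B) \<le> Max (f ` A)"
    proof (rule Max.boundedI)
      show "finite (f ` B)" "f ` B \<noteq> {}"
        using assms(1,2) False by auto
      fix y assume "y \<in> f ` B"
      then obtain a where "a \<in> A" "y \<le> f a"
        using assms(3) by blast
      moreover have "f a \<le> Max (f ` A)"
        using \<open>finite A\<close> \<open>a \<in> A\<close> by simp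
      ultimately show "y \<le> Max (f ` A)" by simp
    qed
    show "Max (f ` A) \<le> Max (f ` B)"
      using assms False by (intro Max_mono) auto
  qed
qed

lemma image_nth_components:
  "{f (xs ! i) | xs i. xs \<in> X \<and> i < length xs} = f ` (\<Union>xs \<in> X. set xs)"
proof (intro equalityI subsetI)
  fix y assume "y \<in> {f (xs ! i) | xs i. xs \<in> X \<and> i < length xs}"
  then show "y \<in> f ` (\<Union>xs \<in> X. set xs)" using nth_mem by blast
next
  fix y assume "y \<in> f ` (\<Union>xs \<in> X. set xs)"
  then obtain xs x where "xs \<in> X" "x \<in> set xs" "y = f x" by blast
  then show "y \<in> {f (xs ! i) | xs i. xs \<in> X \<and> i < length xs}"
    unfolding in_set_conv_nth by blast
qed

lemma proper_prefixes_eq_takes: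
  "(\<forall>u w. w \<noteq> [] \<and> u @ w = v \<longrightarrow> P u) \<longleftrightarrow> (\<forall>j < length v. P (take j v))"
proof (intro iffI allI impI)
  fix j assume prefixes: "\<forall>u w. w \<noteq> [] \<and> u @ w = v \<longrightarrow> P u" and "j < length v"
  then have "drop j v \<noteq> [] \<and> take j v @ drop j v = v" by simp
  with prefixes show "P (take j v)" by blast
next
  fix u w assume takes: "\<forall>j < length v. P (take j v)" and "w \<noteq> [] \<and> u @ w = v"
  then have "length u < length v" "take (length u) v = u" by auto
  with takes show "P u" by metis
qed

lemma is_pos_Nil [simp]: "is_pos t []"
  by (cases t) simp

lemma subt_append: "subt t (w @ u) = subt (subt t w) u"
proof (induction w arbitrary: t)
  case (Cons i w)
  then show ?case by (cases t) simp
qed simp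

lemma is_pos_append: "is_pos t (w @ u) \<longleftrightarrow> is_pos t w \<and> is_pos (subt t w) u"
proof (induction w arbitrary: t)
  case (Cons i w)
  then show ?case by (cases t) auto
qed simp

lemma lab_Cons: "lab (Nd a ts) (i # v) = lab (ts ! i) v"
  by (simp add: lab_def)

lemma height_subt_le: "is_pos t u \<Longrightarrow> height (subt t u) \<le> height t"
proof (induction u arbitrary: t)
  case (Cons i u)
  then obtain a ts where t: "t = Nd a ts" and i: "i < length ts" "is_pos (ts ! i) u"
    by (cases t) auto
  then have "Suc (height (ts ! i)) \<le> height t"
    by (auto intro: Max_ge)
  moreover have "height (subt (ts ! i) u) \<le> height (ts ! i)"
    using Cons.IH i by blast
  ultimately show ?case using t by simp
qed simp

lemma finite_subtrees: "finite {subt t u | u. is_pos t u}"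
proof (induction t)
  case (Nd a ts)
  have "{subt (Nd a ts) u | u. is_pos (Nd a ts) u}
        \<subseteq> insert (Nd a ts) (\<Union>t\<in>set ts. {subt t u | u. is_pos t u})"
  proof
    fix x assume "x \<in> {subt (Nd a ts) u | u. is_pos (Nd a ts) u}"
    then obtain u where "x = subt (Nd a ts) u" "is_pos (Nd a ts) u" by blast
    then show "x \<in> insert (Nd a ts) (\<Union>t\<in>set ts. {subt t u | u. is_pos t u})"
      by (cases u) auto
  qed
  moreover have "finite (insert (Nd a ts) (\<Union>t\<in>set ts. {subt t u | u. is_pos t u}))"
    using Nd by simp
  ultimately show ?case by (rule finite_subset)
qed

fun ranked_out :: "('s, 'd, 'q, 'p) dtla \<Rightarrow> ('d, 'q, 'p) olab tree \<Rightarrow> bool" where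
  "ranked_out M (Nd (OSym d) ts) = (length ts = rkD M d \<and> (\<forall>t\<in>set ts. ranked_out M t))"
| "ranked_out M (Nd (OSt q p) ts) = (ts = [])"
| "ranked_out M (Nd OBot ts) = (ts = [])"

lemma ranked_out_is_pos_transfer:
  assumes "ranked_out M s" "ranked_out M s'" "is_pos s v"
    and "\<forall>j < length v. lab s (take j v) = lab s' (take j v)"
  shows "is_pos s' v"
  using assms
proof (induction v arbitrary: s s')
  case (Cons i v)
  obtain a ts where s: "s = Nd a ts" by (cases s)
  obtain a' ts' where s': "s' = Nd a' ts'" by (cases s')
  have "a = a'"
    using Cons.prems(4)[rule_format, of 0] s s' by (simp add: lab_def)
  with Cons.prems(1,2) s s' have len: "length ts' = length ts"
    by (cases a) auto
  have i: "i < length ts" "is_pos (ts ! i) v"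
    using Cons.prems(3) s by auto
  have "ranked_out M (ts ! i)" "ranked_out M (ts' ! i)"
    using Cons.prems(1,2) s s' \<open>a = a'\<close> i len by (cases a; force)+
  moreover have "\<forall>j < length v. lab (ts ! i) (take j v) = lab (ts' ! i) (take j v)"
  proof (intro allI impI)
    fix j assume "j < length v"
    then have "lab s (take (Suc j) (i # v)) = lab s' (take (Suc j) (i # v))"
      using Cons.prems(4)[rule_format, of "Suc j"] by simp
    then show "lab (ts ! i) (take j v) = lab (ts' ! i) (take j v)"
      using s s' by (simp add: lab_Cons)
  qed
  ultimately show ?case
    using Cons.IH[of "ts ! i" "ts' ! i"] i len s' by simp
qed simp

lemma mem_Vbot_glb_iff:
  "v \<in> Vbot_glb T \<longleftrightarrow> (\<forall>t\<in>T. is_pos t v)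
     \<and> (\<forall>j < length v. \<forall>t\<in>T. \<forall>t'\<in>T. lab t (take j v) = lab t' (take j v))
     \<and> ((\<exists>t\<in>T. \<exists>t'\<in>T. lab t v \<noteq> lab t' v) \<or> (\<forall>t\<in>T. lab t v = OBot))"
  unfolding Vbot_glb_def mem_Collect_eq proper_prefixes_eq_takes ..

lemma Vbot_glb_pairI:
  assumes "v \<in> Vbot_glb T" "t \<in> T" "t' \<in> T"
    and "lab t v \<noteq> lab t' v \<or> lab t v = OBot \<and> lab t' v = OBot"
  shows "v \<in> Vbot_glb {t, t'}"
  using assms unfolding mem_Vbot_glb_iff by blast

lemma Vbot_glb_pair_of_member:
  assumes v: "v \<in> Vbot_glb T" and "t \<in> T"
  shows "\<exists>t'\<in>T. v \<in> Vbot_glb {t, t'}"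
proof (cases "\<exists>t'\<in>T. lab t v \<noteq> lab t' v")
  case True
  with assms show ?thesis by (blast intro: Vbot_glb_pairI)
next
  case False
  then have same: "\<forall>s\<in>T. lab s v = lab t v" by auto
  from v have "(\<exists>s\<in>T. \<exists>s'\<in>T. lab s v \<noteq> lab s' v) \<or> (\<forall>s\<in>T. lab s v = OBot)"
    unfolding mem_Vbot_glb_iff by blast
  with same \<open>t \<in> T\<close> have "lab t v = OBot" by metis
  with assms show ?thesis by (blast intro: Vbot_glb_pairI)
qed

text \<open>The shortest prefix of \<open>v\<close> at which the trees of \<open>T\<close> disagree is a node of
  \<open>V\<^sub>\<bottom>(\<sqinter>T)\<close>; if there is none, all trees of \<open>T\<close> carry \<open>\<bottom>\<close> at \<open>v\<close>.\<close>
lemma Vbot_glb_prefix_of_pair: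
  assumes ranked: "\<forall>s\<in>T. ranked_out M s" and "t \<in> T" "t' \<in> T" and v: "v \<in> Vbot_glb {t, t'}"
  shows "\<exists>w u. v = w @ u \<and> w \<in> Vbot_glb T"
proof -
  define agree where "agree u \<longleftrightarrow> (\<forall>s\<in>T. \<forall>s'\<in>T. lab s u = lab s' u)" for u
  have Vbot_glbI: "w \<in> Vbot_glb T"
    if "\<forall>s\<in>T. is_pos s w" "\<forall>j < length w. agree (take j w)"
      "\<not> agree w \<or> (\<forall>s\<in>T. lab s w = OBot)" for w
    using that unfolding mem_Vbot_glb_iff agree_def by blast
  have "is_pos t v"
    using v unfolding mem_Vbot_glb_iff by blast
  have agree_take: "\<forall>j < length (take k v). agree (take j (take k v))"
    if "\<forall>j<k. agree (take j v)" for k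
    using that by (simp add: min_def)
  have pos: "\<forall>s\<in>T. is_pos s (take k v)" if "\<forall>j<k. agree (take j v)" for k
  proof
    fix s assume "s \<in> T"
    have "is_pos t (take k v)"
      using \<open>is_pos t v\<close> is_pos_append[of t "take k v" "drop k v"] by simp
    moreover have "\<forall>j < length (take k v). lab t (take j (take k v)) = lab s (take j (take k v))"
      using agree_take[OF that] \<open>t \<in> T\<close> \<open>s \<in> T\<close> unfolding agree_def by blast
    ultimately show "is_pos s (take k v)"
      using ranked \<open>t \<in> T\<close> \<open>s \<in> T\<close> by (blast intro: ranked_out_is_pos_transfer)
  qed
  show ?thesis
  proof (cases "\<exists>k \<le> length v. \<not> agree (take k v)")
    case True
    define k where "k = (LEAST k. k \<le> length v \<and> \<not> agree (take k v))"
    have k: "k \<le> length v" "\<not> agree (take k v)"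
      using LeastI_ex[of "\<lambda>k. k \<le> length v \<and> \<not> agree (take k v)"] True
      unfolding k_def by blast+
    have below: "\<forall>j<k. agree (take j v)"
      using not_less_Least[of _ "\<lambda>k. k \<le> length v \<and> \<not> agree (take k v)"] k(1)
      unfolding k_def by fastforce
    have "take k v \<in> Vbot_glb T"
      using pos[OF below] agree_take[OF below] k(2) by (intro Vbot_glbI) blast+
    then show ?thesis
      by (metis append_take_drop_id)
  next
    case False
    then have agree: "\<forall>j<length v. agree (take j v)" "agree v"
      using take_all[of v "length v"] by auto
    then have "lab t v = lab t' v"
      using \<open>t \<in> T\<close> \<open>t' \<in> T\<close> unfolding agree_def by blast
    moreover have "(\<exists>s\<in>{t, t'}. \<exists>s'\<in>{t, t'}. lab s v \<noteq> lab s' v) \<or> (\<forall>s\<in>{t, t'}. lab s v = OBot)"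
      using v unfolding mem_Vbot_glb_iff by blast
    ultimately have "lab t v = OBot" by auto
    with agree(2) \<open>t \<in> T\<close> have "\<forall>s\<in>T. lab s v = OBot"
      unfolding agree_def by metis
    with pos[OF agree(1)] agree(1) have "v \<in> Vbot_glb T"
      by (intro Vbot_glbI) simp_all
    then show ?thesis by blast
  qed
qed

fun wf_input :: "('s, 'd, 'q, 'p) dtla \<Rightarrow> ('s, 'p) ilab tree \<Rightarrow> bool" where
  "wf_input M (Nd (ILa p) ts) = (p \<in> Ps M)"
| "wf_input M (Nd (ISym a) ts) = (a \<in> Sig M \<and> length ts = rkS M a \<and> (\<forall>t\<in>set ts. wf_input M t))"

fun ctx_fill :: "'s option tree \<Rightarrow> 's tree \<Rightarrow> 's tree" where
  "ctx_fill (Nd None ts) s = s"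
| "ctx_fill (Nd (Some a) ts) s = Nd a (map (\<lambda>t. ctx_fill t s) ts)"

lemma embed_Nd [simp]: "embed (Nd a ts) = Nd (ISym a) (map embed ts)"
  by (simp add: embed_def)

lemma plug_Nd [simp]:
  "plug (Nd None ts) p = Nd (ILa p) (map (\<lambda>t. plug t p) ts)"
  "plug (Nd (Some a) ts) p = Nd (ISym a) (map (\<lambda>t. plug t p) ts)"
  unfolding plug_def by simp_all

lemma wf_dtla_axD: "wf_dtla M \<Longrightarrow> p \<in> Ps M \<Longrightarrow> wf_rhs M (\<lambda>i. i = 0) (ax M p)"
  by (simp add: wf_dtla_def)

lemma wf_dtla_rlD:
  "wf_dtla M \<Longrightarrow> q \<in> Qs M \<Longrightarrow> a \<in> Sig M \<Longrightarrow> length ps = rkS M a \<Longrightarrow> set ps \<subseteq> Ps M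
   \<Longrightarrow> rl M q a ps = Some \<zeta> \<Longrightarrow> wf_rhs M (\<lambda>i. 1 \<le> i \<and> i \<le> rkS M a) \<zeta>"
  by (simp add: wf_dtla_def)

lemma la_in_Ps: "wf_dtla M \<Longrightarrow> wf_input M x \<Longrightarrow> la M x \<in> Ps M"
proof (induction x)
  case (Nd a ts)
  show ?case
  proof (cases a)
    case (ISym b)
    with Nd have "set (map (la M) ts) \<subseteq> Ps M" by auto
    with Nd ISym show ?thesis by (auto simp: wf_dtla_def)
  qed (use Nd in simp)
qed

lemma wf_input_plug: "ctxw M C \<Longrightarrow> p \<in> Ps M \<Longrightarrow> wf_input M (plug C p)"
proof (induction C)
  case (Nd a ts)
  then show ?case by (cases a) auto
qed

lemma subst_ranked:
  assumes "wf_rhs M ok \<zeta>" "\<And>q i t. q \<in> Qs M \<Longrightarrow> ok i \<Longrightarrow> f q i = Some t \<Longrightarrow> ranked_out M t"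
    and "subst f \<zeta> = Some t"
  shows "ranked_out M t"
  using assms
proof (induction \<zeta> arbitrary: t)
  case (Nd a us)
  then show ?case by (cases a) (fastforce split: if_splits)+
qed

lemma run_ranked:
  "wf_dtla M \<Longrightarrow> q \<in> Qs M \<Longrightarrow> wf_input M x \<Longrightarrow> run M q x = Some t \<Longrightarrow> ranked_out M t"
proof (induction M q x arbitrary: t rule: run.induct)
  case (1 M q p ts)
  then show ?case by auto
next
  case (2 M q a ts)
  then obtain \<zeta> where \<zeta>: "rl M q a (map (la M) ts) = Some \<zeta>"
    by (auto split: option.splits)
  have "set (map (la M) ts) \<subseteq> Ps M"
    using "2.prems" la_in_Ps by auto
  then have "wf_rhs M (\<lambda>i. 1 \<le> i \<and> i \<le> rkS M a) \<zeta>"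
    using "2.prems" \<zeta> by (intro wf_dtla_rlD[where ps = "map (la M) ts"]) auto
  then show ?case
  proof (rule subst_ranked)
    show "subst (\<lambda>q' i. if 1 \<le> i \<and> i \<le> length ts then run M q' (ts ! (i - 1)) else None) \<zeta> = Some t"
      using "2.prems" \<zeta> by simp
    fix q' i t'
    assume "q' \<in> Qs M" "1 \<le> i \<and> i \<le> rkS M a"
      and "(if 1 \<le> i \<and> i \<le> length ts then run M q' (ts ! (i - 1)) else None) = Some t'"
    with "2.prems" show "ranked_out M t'"
      by (intro "2.IH"[OF \<zeta>, of i]) auto
  qed
qed

lemma MC_ranked: "wf_dtla M \<Longrightarrow> ctxw M C \<Longrightarrow> p \<in> Ps M \<Longrightarrow> MC M C p = Some t \<Longrightarrow> ranked_out M t"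
  unfolding MC_def out_def
  by (erule subst_ranked[where ok = "\<lambda>i. i = 0", rotated 2])
    (auto intro: wf_dtla_axD run_ranked wf_input_plug la_in_Ps split: if_splits)

lemma subst_defined_mono:
  "(\<And>q i. f q i \<noteq> None \<Longrightarrow> g q i \<noteq> None) \<Longrightarrow> subst f \<zeta> \<noteq> None \<Longrightarrow> subst g \<zeta> \<noteq> None"
proof (induction \<zeta>)
  case (Nd a us)
  then show ?case by (cases a) (auto split: if_splits)
qed

lemma la_ctx_fill: "la M (embed (ctx_fill C s)) = la M (plug C (la M (embed s)))"
proof (induction C)
  case (Nd a ts)
  then show ?case by (cases a) (simp_all cong: map_cong)
qed

text \<open>The run on \<open>C[p]\<close> stops at the hole with the leaf \<open>\<langle>q,p\<rangle>\<close>, which is always defined;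
  elsewhere it applies the same rules as the run on \<open>C[s]\<close> with \<open>\<delta>(s) = p\<close>.\<close>
lemma run_ctx_fill_defined:
  fixes M :: "('s, 'd, 'q, 'p) dtla"
  assumes "run M q (embed (ctx_fill C s)) \<noteq> None"
  shows "run M q (plug C (la M (embed s))) \<noteq> None"
  using assms
proof (induction C arbitrary: q)
  case (Nd a ts)
  show ?case
  proof (cases a)
    case (Some b)
    define p where "p = la M (embed s)"
    define ys :: "('s, 'p) ilab tree list" where "ys = map (\<lambda>t. embed (ctx_fill t s)) ts"
    define xs where "xs = map (\<lambda>t. plug t p) ts"
    have ys: "embed (ctx_fill (Nd a ts) s) = Nd (ISym b) ys"
      and xs: "plug (Nd a ts) p = Nd (ISym b) xs"
      by (simp_all add: Some ys_def xs_def comp_def)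
    have "map (la M) ys = map (la M) xs"
      by (simp add: ys_def xs_def p_def la_ctx_fill)
    with Nd.prems ys obtain \<zeta> where \<zeta>: "rl M q b (map (la M) xs) = Some \<zeta>"
      and defined: "subst (\<lambda>q' i. if 1 \<le> i \<and> i \<le> length ys then run M q' (ys ! (i - 1)) else None) \<zeta> \<noteq> None"
      by (auto split: option.splits)
    from defined have "subst (\<lambda>q' i. if 1 \<le> i \<and> i \<le> length xs then run M q' (xs ! (i - 1)) else None) \<zeta> \<noteq> None"
    proof (rule subst_defined_mono[rotated])
      fix q' i
      assume "(if 1 \<le> i \<and> i \<le> length ys then run M q' (ys ! (i - 1)) else None) \<noteq> None"
      moreover have "1 \<le> i \<Longrightarrow> i \<le> length ts \<Longrightarrow> ts ! (i - 1) \<in> set ts" by simp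
      ultimately show "(if 1 \<le> i \<and> i \<le> length xs then run M q' (xs ! (i - 1)) else None) \<noteq> None"
        using Nd.IH by (auto simp: ys_def xs_def p_def split: if_splits)
    qed
    with \<zeta> xs show ?thesis by (simp add: p_def)
  qed simp
qed

lemma gr_ctx_fill: "ctxw M C \<Longrightarrow> gr M s \<Longrightarrow> gr M (ctx_fill C s)"
proof (induction C)
  case (Nd a ts)
  then show ?case by (cases a) auto
qed

lemma MC_defined:
  assumes "total_dtla M" "la_reachable M" "ctxw M C" "p \<in> Ps M"
  shows "MC M C p \<noteq> None"
proof -
  obtain s where s: "gr M s" "la M (embed s) = p"
    using assms(2,4) unfolding la_reachable_def by blast
  have "gr M (ctx_fill C s)"
    using assms(3) s(1) by (rule gr_ctx_fill)
  with assms(1) have "out M (embed (ctx_fill C s)) \<noteq> None"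
    unfolding total_dtla_def by blast
  then have "subst (\<lambda>q i. if i = 0 then run M q (embed (ctx_fill C s)) else None)
      (ax M (la M (plug C p))) \<noteq> None"
    by (simp add: out_def la_ctx_fill s(2))
  then show ?thesis
    unfolding MC_def out_def
    by (rule subst_defined_mono[rotated])
      (use run_ctx_fill_defined[of M _ C s] s(2) in \<open>auto split: if_splits\<close>)
qed

definition pref_diffs :: "('s, 'd, 'q, 'p) dtla \<Rightarrow> ('d, 'q, 'p) olab tree set" where
  "pref_diffs M = {subt (the (MC M C p)) v | C p v. is_ctx M C \<and> p \<in> Ps M \<and> v \<in> Vpref M C}"

lemma Vpref_eq_Vbot_glb:
  assumes "total_dtla M" "la_reachable M" "is_ctx M C"
  shows "Vpref M C = Vbot_glb ((\<lambda>p. the (MC M C p)) ` Ps M)"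
  using MC_defined[OF assms(1,2)] assms(3) by (simp add: Vpref_def is_ctx_def)

lemma pref_diffs_subset_diff:
  assumes "total_dtla M" "la_reachable M"
  shows "pref_diffs M \<subseteq> diff M"
proof
  fix x assume "x \<in> pref_diffs M"
  then obtain C p v where x: "x = subt (the (MC M C p)) v" and C: "is_ctx M C"
    and p: "p \<in> Ps M" and v: "v \<in> Vpref M C"
    unfolding pref_diffs_def by blast
  let ?T = "(\<lambda>p. the (MC M C p)) ` Ps M"
  have "v \<in> Vbot_glb ?T"
    using v Vpref_eq_Vbot_glb[OF assms C] by simp
  then obtain t' where "t' \<in> ?T" "v \<in> Vbot_glb {the (MC M C p), t'}"
    using Vbot_glb_pair_of_member p by blast
  then obtain p' where "p' \<in> Ps M" "v \<in> Vbot_glb {the (MC M C p), the (MC M C p')}"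
    by blast
  moreover have "MC M C p = Some (the (MC M C p))" "MC M C p' = Some (the (MC M C p'))"
    using MC_defined[OF assms] C p \<open>p' \<in> Ps M\<close> by (auto simp: is_ctx_def)
  ultimately show "x \<in> diff M"
    unfolding diff_def x using C p by blast
qed

lemma diff_subset_subtrees_pref_diffs:
  assumes "wf_dtla M" "total_dtla M" "la_reachable M"
  shows "diff M \<subseteq> (\<Union>y \<in> pref_diffs M. {subt y u | u. is_pos y u})"
proof
  fix x assume "x \<in> diff M"
  then obtain C p p' t t' v where x: "x = subt t v" and C: "is_ctx M C"
    and p: "p \<in> Ps M" "p' \<in> Ps M" and t: "MC M C p = Some t" "MC M C p' = Some t'"
    and v: "v \<in> Vbot_glb {t, t'}"
    unfolding diff_def by blast
  let ?T = "(\<lambda>p. the (MC M C p)) ` Ps M"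
  have "\<forall>s\<in>?T. ranked_out M s"
    using MC_ranked[OF assms(1)] MC_defined[OF assms(2,3)] C by (force simp: is_ctx_def)
  moreover have "t \<in> ?T" "t' \<in> ?T"
    using p t by force+
  ultimately obtain w u where "v = w @ u" "w \<in> Vbot_glb ?T"
    using Vbot_glb_prefix_of_pair v by blast
  moreover have "is_pos t v"
    using v unfolding mem_Vbot_glb_iff by blast
  moreover have "subt t w \<in> pref_diffs M"
    using calculation(2) Vpref_eq_Vbot_glb[OF assms(2,3) C] C p(1) t(1)
    unfolding pref_diffs_def by force
  ultimately show "x \<in> (\<Union>y \<in> pref_diffs M. {subt y u | u. is_pos y u})"
    unfolding x by (auto simp: subt_append is_pos_append)
qed

lemma height_diff_dominated:
  assumes "wf_dtla M" "total_dtla M" "la_reachable M" "x \<in> diff M"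
  shows "\<exists>y\<in>pref_diffs M. height x \<le> height y"
proof -
  obtain y u where "y \<in> pref_diffs M" "is_pos y u" "x = subt y u"
    using assms(4) diff_subset_subtrees_pref_diffs[OF assms(1-3)] by blast
  then show ?thesis using height_subt_le by blast
qed

lemma finite_diff_iff_finite_pref_diffs:
  assumes "wf_dtla M" "total_dtla M" "la_reachable M"
  shows "finite (diff M) \<longleftrightarrow> finite (pref_diffs M)"
proof
  assume "finite (diff M)"
  then show "finite (pref_diffs M)"
    using finite_subset[OF pref_diffs_subset_diff[OF assms(2,3)]] by blast
next
  assume "finite (pref_diffs M)"
  then have "finite (\<Union>y \<in> pref_diffs M. {subt y u | u. is_pos y u})"
    by (intro finite_UN_I finite_subtrees)
  then show "finite (diff M)"
    using finite_subset[OF diff_subset_subtrees_pref_diffs[OF assms]] by blast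
qed

lemma pref_diffs_eq_diftup_components:
  assumes "set enum = Ps M"
  shows "pref_diffs M = (\<Union>tup \<in> diftup M enum. set tup)"
proof (intro equalityI subsetI)
  fix x assume "x \<in> pref_diffs M"
  then obtain C p v where x: "x = subt (the (MC M C p)) v" and "is_ctx M C" "p \<in> Ps M" "v \<in> Vpref M C"
    unfolding pref_diffs_def by blast
  then have "map (\<lambda>p. subt (the (MC M C p)) v) enum \<in> diftup M enum"
    and "x \<in> set (map (\<lambda>p. subt (the (MC M C p)) v) enum)"
    using assms unfolding diftup_def by auto
  then show "x \<in> (\<Union>tup \<in> diftup M enum. set tup)" by blast
next
  fix x assume "x \<in> (\<Union>tup \<in> diftup M enum. set tup)"
  then show "x \<in> pref_diffs M"
    using assms unfolding diftup_def pref_diffs_def by fastforce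
qed

lemma finite_diftup_iff_finite_pref_diffs:
  assumes "set enum = Ps M"
  shows "finite (diftup M enum) \<longleftrightarrow> finite (pref_diffs M)"
proof
  assume "finite (diftup M enum)"
  then show "finite (pref_diffs M)"
    by (simp add: pref_diffs_eq_diftup_components[OF assms])
next
  assume "finite (pref_diffs M)"
  moreover have "diftup M enum \<subseteq> {xs. set xs \<subseteq> pref_diffs M \<and> length xs = length enum}"
    using pref_diffs_eq_diftup_components[OF assms] by (auto simp: diftup_def)
  ultimately show "finite (diftup M enum)"
    by (blast intro: finite_subset finite_lists_length_eq)
qed

theorem mainTheorem1:
  fixes M :: "('s, 'd, 'q, 'p) dtla" and enum :: "'p list"
  assumes "dtpla M" and "total_dtla M" and "la_reachable M"
    and "distinct enum" and "set enum = Ps M"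
  shows "(SUP t \<in> diff M. enat (height t))
           = (SUP t \<in> {subt (the (MC M C p)) v | C p v. is_ctx M C \<and> p \<in> Ps M \<and> v \<in> Vpref M C}.
                enat (height t))
         \<and> (finite (diff M) \<longleftrightarrow> finite (diftup M enum))
         \<and> (finite (diff M) \<longrightarrow>
              maxdiff M = Max {height (tup ! i) | tup i. tup \<in> diftup M enum \<and> i < length tup})"
proof -
  have wf: "wf_dtla M"
    using assms(1) by (simp add: dtpla_def)
  note pref_diffs_sub = pref_diffs_subset_diff[OF assms(2,3)]
  note dominated = height_diff_dominated[OF wf assms(2,3)]
  have heights: "{height (tup ! i) | tup i. tup \<in> diftup M enum \<and> i < length tup} = height ` pref_diffs M"
    unfolding pref_diffs_eq_diftup_components[OF assms(5)] by (rule image_nth_components)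
  show ?thesis
  proof (intro conjI impI)
    show "(SUP t \<in> diff M. enat (height t)) = (SUP t \<in> {subt (the (MC M C p)) v | C p v.
            is_ctx M C \<and> p \<in> Ps M \<and> v \<in> Vpref M C}. enat (height t))"
      unfolding pref_diffs_def[symmetric]
      by (rule SUP_eq) (use pref_diffs_sub dominated in fastforce)+
    show "finite (diff M) \<longleftrightarrow> finite (diftup M enum)"
      using finite_diff_iff_finite_pref_diffs[OF wf assms(2,3)]
        finite_diftup_iff_finite_pref_diffs[OF assms(5)] by simp
    assume "finite (diff M)"
    then show "maxdiff M = Max {height (tup ! i) | tup i. tup \<in> diftup M enum \<and> i < length tup}"
      unfolding maxdiff_def heights using pref_diffs_sub dominated
      by (intro Max_image_eq_if_dominated) blast+
  qed
qed

end
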